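(* Let $m,n$ be positive integers with $n\le m$. Suppose there is a scheme that encodes every set $S\subseteq[m]$ with $|S|\leq n$ as a bit string $\phi(S)\in\{0,1\}^s$, together with an exact quantum bit-probe query algorithm that, for every such $S$ and every $i\in[m]$, given query $i$ and oracle access to $\phi(S)$, outputs with certainty whether $i\in S$, making only one bit-probe. Then $s\geq m$.
   Context: $[m]=\{0,\dots,m-1\}$. Quantum bit-probe model: the algorithm operates on a Hilbert space $\mathcal H_L\otimes\mathcal H_B\otimes\mathcal H_Z$, where $\mathcal H_L$ holds $\lceil\log_2 s\rceil$ address qubits, $\mathcal H_B$ is one data qubit and $\mathcal H_Z$ is an arbitrary workspace. For an input string $x\in\{0,1\}^s$ the oracle $O_x$ acts on basis states by $|l\rangle|b\rangle|z\rangle\mapsto|l\rangle|b\oplus x_l\rangle|z\rangle$. An algorithm with $t$ probes is a sequence of input-independent unitaries $U_0,\dots,U_t$; on query $i$ it starts in a fixed basis state encoding $i$ (with all other qubits $|0\rangle$), applies $U_tO_xU_{t-1}O_x\cdots U_1O_xU_0$, and outputs the result of measuring designated output qubits in the computational basis. It is exact if the output is correct with probability 1 for every input and query. *)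

theory Defs
  imports "Jordan_Normal_Form.Schur_Decomposition"
begin

definition addr_qubits :: "nat \<Rightarrow> nat" where
  "addr_qubits s = (LEAST a. s \<le> 2 ^ a)"

text \<open>Dimension of H_L (x) H_B (x) H_Z, where the workspace consists of w qubits.
  Basis state |l>|b>|z> has index (2*l + b) * 2^w + z.\<close>
definition bp_dim :: "nat \<Rightarrow> nat \<Rightarrow> nat" where
  "bp_dim s w = 2 ^ addr_qubits s * 2 * 2 ^ w"

text \<open>Image of basis index c under O_x: flip the data qubit iff x_l = 1 for the
  address l (addresses l \<ge> s, which exist when s is not a power of 2, read bit 0).\<close>
definition oracle_target :: "nat \<Rightarrow> nat \<Rightarrow> (nat \<Rightarrow> bool) \<Rightarrow> nat \<Rightarrow> nat" where
  "oracle_target s w x c =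
     (let W = 2 ^ w; l = c div (2 * W) in
      if l < s \<and> x l then (if (c div W) mod 2 = 0 then c + W else c - W) else c)"

definition oracle_mat :: "nat \<Rightarrow> nat \<Rightarrow> (nat \<Rightarrow> bool) \<Rightarrow> complex mat" where
  "oracle_mat s w x = mat (bp_dim s w) (bp_dim s w)
     (\<lambda>(r, c). if r = oracle_target s w x c then 1 else 0)"

definition unitary_mat :: "nat \<Rightarrow> complex mat \<Rightarrow> bool" where
  "unitary_mat N U \<longleftrightarrow> U \<in> carrier_mat N N \<and> mat_adjoint U * U = 1\<^sub>m N"

definition one_probe_final ::
  "nat \<Rightarrow> nat \<Rightarrow> complex mat \<Rightarrow> complex mat \<Rightarrow> (nat \<Rightarrow> bool) \<Rightarrow> nat \<Rightarrow> complex vec" where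
  "one_probe_final s w U0 U1 x q =
     U1 * oracle_mat s w x * U0 *\<^sub>v unit_vec (bp_dim s w) q"

end

theory Submission
  imports Defs
begin

text \<open>With a single probe, every amplitude of the final state is an affine function
  \<open>a + \<Sum>\<^sub>l x\<^sub>l \<beta>\<^sub>l\<close> of the probed bits, since \<open>O\<^sub>x\<close> touches the amplitude on address \<open>l\<close>
  only when \<open>x\<^sub>l = 1\<close>. For query \<open>i\<close> pick a basis state \<open>k\<^sub>i\<close> with output 1 that the
  state reaches on \<open>\<phi>{i}\<close>; exactness forces its amplitude to vanish on \<open>\<phi>{}\<close> and on
  every \<open>\<phi>{j}\<close>, \<open>j \<noteq> i\<close>. Subtracting the value on \<open>\<phi>{}\<close> yields a nonsingular diagonal
  \<open>m \<times> m\<close> matrix that factors through \<open>s\<close> dimensions, so \<open>m \<le> s\<close>.\<close>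

lemma le_of_diagonal_factorization:
  fixes c \<beta> :: "nat \<Rightarrow> nat \<Rightarrow> 'a::idom"
  assumes off_diag: "\<And>i j. i < m \<Longrightarrow> j < m \<Longrightarrow> j \<noteq> i \<Longrightarrow> (\<Sum>l<s. c j l * \<beta> i l) = 0"
    and diag: "\<And>i. i < m \<Longrightarrow> (\<Sum>l<s. c i l * \<beta> i l) \<noteq> 0"
  shows "m \<le> s"
proof (rule ccontr)
  assume "\<not> m \<le> s"
  hence sm: "s < m" by simp
  \<comment> \<open>Pad both factors to \<open>m \<times> m\<close>; then row \<open>s\<close> of \<open>B\<close> vanishes although \<open>C * B\<close> is nonsingular.\<close>
  define C where "C = mat m m (\<lambda>(j,l). if l < s then c j l else 0)"
  define B where "B = mat m m (\<lambda>(l,i). if l < s then \<beta> i l else 0)"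
  have C: "C \<in> carrier_mat m m" and B: "B \<in> carrier_mat m m" unfolding C_def B_def by auto
  have CB: "C * B \<in> carrier_mat m m" using C B by auto
  have CB_entry: "(C * B) $$ (j,i) = (\<Sum>l<s. c j l * \<beta> i l)" if "j < m" "i < m" for i j
  proof -
    have "(C * B) $$ (j,i) = (\<Sum>l\<in>{0..<m}. (if l < s then c j l else 0) * (if l < s then \<beta> i l else 0))"
      using that unfolding C_def B_def by (simp add: scalar_prod_def)
    also have "\<dots> = (\<Sum>l\<in>{0..<s}. c j l * \<beta> i l)"
      by (rule sum.mono_neutral_cong_right) (use sm in auto)
    finally show ?thesis by (simp add: atLeast0LessThan)
  qed
  have "upper_triangular (C * B)"
    unfolding upper_triangular_def using CB CB_entry off_diag by auto
  hence "det (C * B) = prod_list (diag_mat (C * B))"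
    using det_upper_triangular CB by blast
  also have "\<dots> \<noteq> 0"
    unfolding prod_list_zero_iff diag_mat_def using CB CB_entry diag by auto
  finally have "det C * det B \<noteq> 0" using det_mult[OF C B] by simp
  moreover have "B = mat\<^sub>r m m (\<lambda>l. if l = s then 0\<^sub>v m else row B l)"
    by (rule eq_matI) (use sm in \<open>auto simp: B_def\<close>)
  hence "det B = 0"
    using det_row_0[of s m "\<lambda>l. row B l"] sm B by auto
  ultimately show False by simp
qed

lemma le_of_affine_separation:
  fixes a :: "nat \<Rightarrow> 'a::idom" and \<beta> :: "nat \<Rightarrow> nat \<Rightarrow> 'a"
    and x\<^sub>0 :: "nat \<Rightarrow> bool" and y :: "nat \<Rightarrow> nat \<Rightarrow> bool" and s :: nat
  defines "f i x \<equiv> a i + (\<Sum>l<s. of_bool (x l) * \<beta> i l)"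
  assumes "\<And>i. i < m \<Longrightarrow> f i x\<^sub>0 = 0"
    and "\<And>i j. i < m \<Longrightarrow> j < m \<Longrightarrow> j \<noteq> i \<Longrightarrow> f i (y j) = 0"
    and "\<And>i. i < m \<Longrightarrow> f i (y i) \<noteq> 0"
  shows "m \<le> s"
proof (rule le_of_diagonal_factorization)
  define c :: "nat \<Rightarrow> nat \<Rightarrow> 'a" where "c j l = of_bool (y j l) - of_bool (x\<^sub>0 l)" for j l
  have *: "(\<Sum>l<s. c j l * \<beta> i l) = f i (y j) - f i x\<^sub>0" for i j
    unfolding c_def f_def by (simp add: left_diff_distrib sum_subtractf)
  show "(\<Sum>l<s. c j l * \<beta> i l) = 0" if "i < m" "j < m" "j \<noteq> i" for i j
    unfolding * using assms(2,3) that by simp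
  show "(\<Sum>l<s. c i l * \<beta> i l) \<noteq> 0" if "i < m" for i
    unfolding * using assms(2,4) that by simp
qed

definition flip_bit :: "nat \<Rightarrow> nat \<Rightarrow> nat" where
  "flip_bit W c = (if (c div W) mod 2 = 0 then c + W else c - W)"

lemma flip_bit_div_double: "0 < W \<Longrightarrow> flip_bit W c div (2 * W) = c div (2 * W)"
  and flip_bit_flip_bit: "0 < W \<Longrightarrow> flip_bit W (flip_bit W c) = c"
proof -
  assume W: "0 < W"
  have div2: "x div (2*W) = x div W div 2" for x by (metis div_mult2_eq mult.commute)
  define q where "q = c div W"
  have "flip_bit W c div (2*W) = c div (2*W) \<and> flip_bit W (flip_bit W c) = c"
  proof (cases "q mod 2 = 0")
    case True
    then obtain k where k: "q = 2*k" by auto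
    have e: "(c + W) div W = q + 1" using W unfolding q_def by simp
    have f: "flip_bit W c = c + W" using True unfolding flip_bit_def q_def by simp
    have g: "flip_bit W (c + W) = c" unfolding flip_bit_def e k by simp
    show ?thesis unfolding f g div2 e using k unfolding q_def by simp
  next
    case False
    then obtain k where k: "q = 2*k+1" by (metis mod2_eq_if odd_two_times_div_two_succ)
    hence cW: "W \<le> c" using W unfolding q_def by (metis div_less not_less add_is_0 zero_neq_one)
    have e: "(c - W) div W = q - 1" using W cW unfolding q_def
      by (metis add_diff_cancel_right' div_add_self2 le_add_diff_inverse2 less_not_refl2)
    have f: "flip_bit W c = c - W" using False unfolding flip_bit_def q_def by simp
    have g: "flip_bit W (c - W) = c" unfolding flip_bit_def e k using cW by simp
    show ?thesis unfolding f g div2 e using k unfolding q_def by simp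
  qed
  thus "flip_bit W c div (2*W) = c div (2*W)" "flip_bit W (flip_bit W c) = c" by auto
qed

lemma oracle_target_eq:
  "oracle_target s w x c =
     (if c div (2 * 2^w) < s \<and> x (c div (2 * 2^w)) then flip_bit (2^w) c else c)"
  unfolding oracle_target_def flip_bit_def Let_def by simp

lemma less_bp_dim_iff: "c < bp_dim s w \<longleftrightarrow> c div (2 * 2^w) < 2 ^ addr_qubits s"
  unfolding bp_dim_def
  using div_less_iff_less_mult[of "2*2^w" c "2^addr_qubits s"] by (simp add: mult.assoc)

lemma oracle_target_less: "c < bp_dim s w \<Longrightarrow> oracle_target s w x c < bp_dim s w"
  unfolding oracle_target_eq less_bp_dim_iff using flip_bit_div_double[of "2^w" c] by auto

lemma oracle_target_oracle_target: "oracle_target s w x (oracle_target s w x c) = c"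
  unfolding oracle_target_eq using flip_bit_div_double[of "2^w" c] flip_bit_flip_bit[of "2^w" c]
  by auto

lemma oracle_mat_carrier: "oracle_mat s w x \<in> carrier_mat (bp_dim s w) (bp_dim s w)"
  unfolding oracle_mat_def by simp

lemma oracle_mat_mult_vec_index:
  assumes v: "v \<in> carrier_vec (bp_dim s w)" and r: "r < bp_dim s w"
  shows "(oracle_mat s w x *\<^sub>v v) $ r = v $ oracle_target s w x r"
proof -
  let ?N = "bp_dim s w" and ?t = "oracle_target s w x"
  have "(oracle_mat s w x *\<^sub>v v) $ r = (\<Sum>i\<in>{0..<?N}. (if r = ?t i then 1 else 0) * v $ i)"
    using v r unfolding oracle_mat_def by (simp add: scalar_prod_def)
  also have "\<dots> = (\<Sum>i\<in>{0..<?N}. if i = ?t r then v $ i else 0)"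
    by (rule sum.cong) (auto simp: oracle_target_oracle_target)
  also have "\<dots> = v $ ?t r" using oracle_target_less[OF r] by simp
  finally show ?thesis .
qed

lemma oracle_mat_mult_vec_eq_0D:
  assumes v: "v \<in> carrier_vec (bp_dim s w)" and "oracle_mat s w x *\<^sub>v v = 0\<^sub>v (bp_dim s w)"
  shows "v = 0\<^sub>v (bp_dim s w)"
proof (rule eq_vecI)
  fix r assume "r < dim_vec (0\<^sub>v (bp_dim s w) :: 'a::comm_semiring_1 vec)"
  hence r: "r < bp_dim s w" by simp
  have "v $ r = (oracle_mat s w x *\<^sub>v v) $ (oracle_target s w x r)"
    using oracle_mat_mult_vec_index[OF v oracle_target_less[OF r]]
    by (simp add: oracle_target_oracle_target)
  thus "v $ r = 0\<^sub>v (bp_dim s w) $ r" using assms(2) r oracle_target_less[OF r] by simp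
qed (use v in simp)

lemma unitary_mult_vec_eq_0D:
  assumes U: "unitary_mat N U" and v: "v \<in> carrier_vec N" and "U *\<^sub>v v = 0\<^sub>v N"
  shows "v = 0\<^sub>v N"
proof -
  have UC: "U \<in> carrier_mat N N" and UU: "mat_adjoint U * U = 1\<^sub>m N"
    using U unfolding unitary_mat_def by auto
  have AC: "mat_adjoint U \<in> carrier_mat N N"
    using UC unfolding mat_adjoint_def carrier_mat_def by simp
  have "v = (mat_adjoint U * U) *\<^sub>v v" using v by (simp add: UU)
  also have "\<dots> = mat_adjoint U *\<^sub>v (U *\<^sub>v v)" by (rule assoc_mult_mat_vec[OF AC UC v])
  also have "\<dots> = 0\<^sub>v N" unfolding assms(3) by (rule eq_vecI) (use AC in \<open>auto simp: scalar_prod_def\<close>)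
  finally show ?thesis .
qed

lemma one_probe_final_eq:
  assumes "unitary_mat (bp_dim s w) U0" "unitary_mat (bp_dim s w) U1"
  shows "one_probe_final s w U0 U1 x q =
    U1 *\<^sub>v (oracle_mat s w x *\<^sub>v (U0 *\<^sub>v unit_vec (bp_dim s w) q))"
  using assms oracle_mat_carrier[of s w x] unfolding one_probe_final_def unitary_mat_def
  by (subst assoc_mult_mat_vec[of _ "bp_dim s w" "bp_dim s w" _ "bp_dim s w"]) auto

lemma one_probe_final_index:
  assumes U: "unitary_mat (bp_dim s w) U0" "unitary_mat (bp_dim s w) U1" and k: "k < bp_dim s w"
  shows "one_probe_final s w U0 U1 x q $ k =
    (\<Sum>r<bp_dim s w. U1 $$ (k, r) * (U0 *\<^sub>v unit_vec (bp_dim s w) q) $ oracle_target s w x r)"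
proof -
  let ?N = "bp_dim s w" and ?\<psi> = "U0 *\<^sub>v unit_vec (bp_dim s w) q"
  have C0: "U0 \<in> carrier_mat ?N ?N" and C1: "U1 \<in> carrier_mat ?N ?N"
    using U unfolding unitary_mat_def by auto
  have \<psi>: "?\<psi> \<in> carrier_vec ?N" using C0 by simp
  have "one_probe_final s w U0 U1 x q $ k = (\<Sum>r<?N. U1 $$ (k, r) * (oracle_mat s w x *\<^sub>v ?\<psi>) $ r)"
    unfolding one_probe_final_eq[OF U] using C1 k oracle_mat_carrier[of s w x] \<psi>
    by (simp add: scalar_prod_def atLeast0LessThan)
  also have "\<dots> = (\<Sum>r<?N. U1 $$ (k, r) * ?\<psi> $ oracle_target s w x r)"
    by (rule sum.cong) (simp_all add: oracle_mat_mult_vec_index[OF \<psi>])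
  finally show ?thesis .
qed

lemma one_probe_final_affine:
  assumes U: "unitary_mat (bp_dim s w) U0" "unitary_mat (bp_dim s w) U1"
  shows "\<exists>a \<beta>. \<forall>q k x. k < bp_dim s w \<longrightarrow>
           one_probe_final s w U0 U1 x q $ k = a q k + (\<Sum>l<s. of_bool (x l) * \<beta> q k l)"
proof -
  let ?N = "bp_dim s w" and ?D = "2 * 2 ^ w :: nat" and ?\<psi> = "\<lambda>q. U0 *\<^sub>v unit_vec (bp_dim s w) q"
  define g where "g q k r = U1 $$ (k, r) * (?\<psi> q $ flip_bit (2^w) r - ?\<psi> q $ r)" for q k r
  define a where "a q k = (\<Sum>r<?N. U1 $$ (k, r) * ?\<psi> q $ r)" for q k
  define \<beta> where "\<beta> q k l = (\<Sum>r\<in>{r. r < ?N \<and> r div ?D = l}. g q k r)" for q k l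
  have "one_probe_final s w U0 U1 x q $ k = a q k + (\<Sum>l<s. of_bool (x l) * \<beta> q k l)"
    if k: "k < ?N" for q k x
  proof -
    let ?hit = "\<lambda>r. of_bool (r div ?D < s \<and> x (r div ?D)) * g q k r"
    let ?S = "{r. r < ?N \<and> r div ?D < s}"
    have "one_probe_final s w U0 U1 x q $ k = (\<Sum>r<?N. U1 $$ (k, r) * ?\<psi> q $ r + ?hit r)"
      unfolding one_probe_final_index[OF U k]
      by (rule sum.cong) (auto simp: oracle_target_eq g_def algebra_simps)
    also have "\<dots> = a q k + (\<Sum>r\<in>?S. ?hit r)"
      unfolding a_def sum.distrib by (auto intro: sum.mono_neutral_right)
    also have "(\<Sum>r\<in>?S. ?hit r) = (\<Sum>l<s. \<Sum>r\<in>{r \<in> ?S. r div ?D = l}. ?hit r)"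
      by (rule sum.group[symmetric]) auto
    also have "\<dots> = (\<Sum>l<s. of_bool (x l) * \<beta> q k l)"
      unfolding \<beta>_def sum_distrib_left by (rule sum.cong) (auto intro!: sum.cong)
    finally show ?thesis .
  qed
  thus ?thesis by blast
qed

lemma one_probe_final_nonzero:
  assumes U: "unitary_mat (bp_dim s w) U0" "unitary_mat (bp_dim s w) U1" and q: "q < bp_dim s w"
  shows "\<exists>k < bp_dim s w. one_probe_final s w U0 U1 x q $ k \<noteq> 0"
proof (rule ccontr)
  let ?N = "bp_dim s w" and ?e = "unit_vec (bp_dim s w) q :: complex vec"
  assume all_zero: "\<not> ?thesis"
  have C0: "U0 \<in> carrier_mat ?N ?N" and C1: "U1 \<in> carrier_mat ?N ?N"
    using U unfolding unitary_mat_def by auto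
  have \<psi>: "U0 *\<^sub>v ?e \<in> carrier_vec ?N" using C0 by simp
  have "U1 *\<^sub>v (oracle_mat s w x *\<^sub>v (U0 *\<^sub>v ?e)) = 0\<^sub>v ?N"
    using all_zero C1 unfolding one_probe_final_eq[OF U] by (intro eq_vecI) auto
  hence "?e = 0\<^sub>v ?N"
    using \<psi> oracle_mat_carrier[of s w x]
    by (metis unitary_mult_vec_eq_0D[OF U(2)] unitary_mult_vec_eq_0D[OF U(1)]
        oracle_mat_mult_vec_eq_0D mult_mat_vec_carrier unit_vec_carrier)
  thus False using q by (metis index_unit_vec(1) index_zero_vec(1) zero_neq_one)
qed

theorem mainTheorem6:
  fixes m n s w :: nat
    and \<phi> :: "nat set \<Rightarrow> (nat \<Rightarrow> bool)"
    and U0 U1 :: "complex mat"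
    and init :: "nat \<Rightarrow> nat"
    and out :: "nat \<Rightarrow> bool"
  assumes "0 < n" and "n \<le> m"
    and U: "unitary_mat (bp_dim s w) U0" "unitary_mat (bp_dim s w) U1"
    and init: "\<And>i. i < m \<Longrightarrow> init i < bp_dim s w"
    and exact: "\<And>S i k. S \<subseteq> {..<m} \<Longrightarrow> card S \<le> n \<Longrightarrow> i < m \<Longrightarrow> k < bp_dim s w \<Longrightarrow>
           one_probe_final s w U0 U1 (\<phi> S) (init i) $ k \<noteq> 0 \<Longrightarrow> out k = (i \<in> S)"
  shows "m \<le> s"
proof -
  let ?amp = "\<lambda>x i k. one_probe_final s w U0 U1 x (init i) $ k"
  have small: "{} \<subseteq> {..<m} \<and> card {} \<le> n" "j < m \<Longrightarrow> {j} \<subseteq> {..<m} \<and> card {j} \<le> n" for j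
    using assms(1) by auto
  have "\<exists>k. k < bp_dim s w \<and> ?amp (\<phi> {i}) i k \<noteq> 0 \<and> out k" if i: "i < m" for i
  proof -
    obtain k where "k < bp_dim s w" "?amp (\<phi> {i}) i k \<noteq> 0"
      using one_probe_final_nonzero[OF U init[OF i]] by blast
    moreover have "out k" using exact[of "{i}" i k] small(2)[OF i] i calculation by simp
    ultimately show ?thesis by blast
  qed
  then obtain k where k: "k i < bp_dim s w" "?amp (\<phi> {i}) i (k i) \<noteq> 0" "out (k i)" if "i < m" for i
    by (metis someI_ex)
  have vanish: "?amp (\<phi> S) i (k i) = 0" if "i < m" "S \<subseteq> {..<m} \<and> card S \<le> n" "i \<notin> S" for i S
    using exact[of S i "k i"] k[OF that(1)] that by blast
  obtain a \<beta> where affine: "\<And>q k x. k < bp_dim s w \<Longrightarrow>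
      one_probe_final s w U0 U1 x q $ k = a q k + (\<Sum>l<s. of_bool (x l) * \<beta> q k l)"
    using one_probe_final_affine[OF U] by blast
  show ?thesis
  proof (rule le_of_affine_separation[where a = "\<lambda>i. a (init i) (k i)" and \<beta> = "\<lambda>i. \<beta> (init i) (k i)"
        and x\<^sub>0 = "\<phi> {}" and y = "\<lambda>j. \<phi> {j}"])
    show "a (init i) (k i) + (\<Sum>l<s. of_bool (\<phi> {} l) * \<beta> (init i) (k i) l) = 0" if "i < m" for i
      using vanish[OF that small(1)] affine[OF k(1)[OF that]] by simp
    show "a (init i) (k i) + (\<Sum>l<s. of_bool (\<phi> {j} l) * \<beta> (init i) (k i) l) = 0"
      if "i < m" "j < m" "j \<noteq> i" for i j
      using vanish[OF that(1) small(2)[OF that(2)]] affine[OF k(1)[OF that(1)]] that(3) by simp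
    show "a (init i) (k i) + (\<Sum>l<s. of_bool (\<phi> {i} l) * \<beta> (init i) (k i) l) \<noteq> 0" if "i < m" for i
      using k(2)[OF that] affine[OF k(1)[OF that]] by simp
  qed
qed

end
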